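(* Let $E$ be a topological space and $C:E\to 2^E$ a constraint function. Let $\mathcal{U}$ and $\mathcal{V}$ be collections of subsets of $E$ such that $\mathcal{U}$ is a refinement of $\mathcal{V}$, i.e. each $U\in\mathcal{U}$ is a subset of some $V\in\mathcal{V}$. Then this induces an order preserving function $TP_C(\mathcal{U})\to TP_C(\mathcal{V})$: namely, for any function $\phi:\mathcal{U}\to\mathcal{V}$ with $A\subseteq\phi(A)$ for all $A\in\mathcal{U}$, the assignment $[A]\mapsto[\phi(A)]$ is a well-defined order preserving map $TP_C(\mathcal{U})\to TP_C(\mathcal{V})$.
   Context: A set-valued function $C:E\to 2^E$ on a topological space $E$ is a constraint function if $x\in C(x)$ for all $x\in E$ and $C$ is lower semicontinuous: for every open $U\subseteq E$ the set $\{x\in E: C(x)\cap U\neq\emptyset\}$ is open. For $U\subseteq E$ write $C(U)=\bigcup_{x\in U}C(x)$. For subsets $A,B\subseteq E$ write $A\prec B$ if for every open set $U$ containing $A$, $C(U)\cap B\neq\emptyset$. Given a collection $\mathcal{U}$ of subsets of $E$, the constraint graph $TG_C(\mathcal{U})$ is the directed graph with vertex set $\mathcal{U}$ and an edge $(A,B)$ whenever $A\prec B$. The tracklet poset $TP_C(\mathcal{U})$ is the set of equivalence classes $[A]$ of the preorder given by the transitive closure of the edge relation of $TG_C(\mathcal{U})$ (where $A,B$ are equivalent if each precedes the other in the transitive closure), ordered by $[A]\le[B]$ iff $A$ precedes $B$ in the transitive closure. *)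

theory Defs
  imports "HOL-Analysis.Analysis"
begin

text \<open>Constraint function on the topological space X: C x \<subseteq> E, x \<in> C x, and C is
  lower semicontinuous.\<close>
definition constraint_fun :: "'a topology \<Rightarrow> ('a \<Rightarrow> 'a set) \<Rightarrow> bool" where
  "constraint_fun X C \<longleftrightarrow>
     (\<forall>x\<in>topspace X. x \<in> C x \<and> C x \<subseteq> topspace X) \<and>
     (\<forall>U. openin X U \<longrightarrow> openin X {x \<in> topspace X. C x \<inter> U \<noteq> {}})"

definition Cimage :: "('a \<Rightarrow> 'a set) \<Rightarrow> 'a set \<Rightarrow> 'a set" where
  "Cimage C U = (\<Union>x\<in>U. C x)"

definition cprec :: "'a topology \<Rightarrow> ('a \<Rightarrow> 'a set) \<Rightarrow> 'a set \<Rightarrow> 'a set \<Rightarrow> bool" where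
  "cprec X C A B \<longleftrightarrow> (\<forall>U. openin X U \<and> A \<subseteq> U \<longrightarrow> Cimage C U \<inter> B \<noteq> {})"

definition tg_edges :: "'a topology \<Rightarrow> ('a \<Rightarrow> 'a set) \<Rightarrow> 'a set set \<Rightarrow> ('a set \<times> 'a set) set" where
  "tg_edges X C \<U> = {(A, B). A \<in> \<U> \<and> B \<in> \<U> \<and> cprec X C A B}"

definition tp_rel :: "'a topology \<Rightarrow> ('a \<Rightarrow> 'a set) \<Rightarrow> 'a set set \<Rightarrow> ('a set \<times> 'a set) set" where
  "tp_rel X C \<U> = Id_on \<U> \<union> (tg_edges X C \<U>)\<^sup>+"

definition tp_equiv :: "'a topology \<Rightarrow> ('a \<Rightarrow> 'a set) \<Rightarrow> 'a set set \<Rightarrow> ('a set \<times> 'a set) set" where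
  "tp_equiv X C \<U> = {(A, B). (A, B) \<in> tp_rel X C \<U> \<and> (B, A) \<in> tp_rel X C \<U>}"

definition TP :: "'a topology \<Rightarrow> ('a \<Rightarrow> 'a set) \<Rightarrow> 'a set set \<Rightarrow> 'a set set set" where
  "TP X C \<U> = \<U> // tp_equiv X C \<U>"

definition tp_le :: "'a topology \<Rightarrow> ('a \<Rightarrow> 'a set) \<Rightarrow> 'a set set \<Rightarrow> 'a set set \<Rightarrow> 'a set set \<Rightarrow> bool" where
  "tp_le X C \<U> P Q \<longleftrightarrow> (\<exists>A\<in>P. \<exists>B\<in>Q. (A, B) \<in> tp_rel X C \<U>)"

end

theory Submission
  imports Defs
begin

text \<open>The only property of \<open>\<prec>\<close> that matters is its monotonicity: enlarging \<open>A\<close> leaves fewer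
  open neighbourhoods to test, and enlarging \<open>B\<close> makes them easier to meet. Hence \<open>\<phi>\<close> maps
  edges of \<open>TG\<^sub>C(\<U>)\<close> to edges of \<open>TG\<^sub>C(\<V>)\<close>, so it preserves the generated preorders and their
  equivalences, and therefore descends to a monotone map of the quotients.\<close>

lemma trancl_map:
  assumes "\<And>x y. (x, y) \<in> r \<Longrightarrow> (f x, f y) \<in> s" and "(a, b) \<in> r\<^sup>+"
  shows "(f a, f b) \<in> s\<^sup>+"
  using assms(2)
proof (induction rule: trancl_induct)
  case (base b)
  then show ?case using assms(1) by blast
next
  case (step b c)
  then show ?case using assms(1) by (meson trancl_into_trancl)
qed

context
  fixes A :: "'a set" and r :: "'a rel" and B :: "'b set" and s :: "'b rel" and f :: "'a \<Rightarrow> 'b"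
  assumes r: "equiv A r" and s: "equiv B s"
    and f_mem: "f \<in> A \<rightarrow> B" and f_rel: "\<And>x y. (x, y) \<in> r \<Longrightarrow> (f x, f y) \<in> s"
begin

lemma class_map_respects: "(\<lambda>x. s``{f x}) respects r"
  by (rule congruentI) (simp add: f_rel equiv_class_eq[OF s])

lemma UN_class_map_funcset: "(\<lambda>X. \<Union>x\<in>X. s``{f x}) \<in> A//r \<rightarrow> B//s"
proof
  fix X assume "X \<in> A//r"
  then show "(\<Union>x\<in>X. s``{f x}) \<in> B//s"
    by (rule UN_equiv_class_type[OF r class_map_respects]) (use f_mem in \<open>auto intro: quotientI\<close>)
qed

lemma UN_class_map_class: "a \<in> A \<Longrightarrow> (\<Union>x\<in>r``{a}. s``{f x}) = s``{f a}"
  by (rule UN_equiv_class[OF r class_map_respects])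

lemma mem_UN_class_map: "X \<in> A//r \<Longrightarrow> x \<in> X \<Longrightarrow> f x \<in> (\<Union>y\<in>X. s``{f y})"
  using in_quotient_imp_subset[OF r] f_mem equiv_class_self[OF s] by blast

end

lemma cprec_mono: "cprec X C A B \<Longrightarrow> A \<subseteq> A' \<Longrightarrow> B \<subseteq> B' \<Longrightarrow> cprec X C A' B'"
  unfolding cprec_def by blast

lemma tp_rel_subset: "tp_rel X C \<U> \<subseteq> \<U> \<times> \<U>"
proof -
  have "tg_edges X C \<U> \<subseteq> \<U> \<times> \<U>"
    unfolding tg_edges_def by auto
  then show ?thesis
    unfolding tp_rel_def using trancl_subset_Sigma by blast
qed

lemma trans_tp_rel: "trans (tp_rel X C \<U>)"
  unfolding tp_rel_def trans_def by (auto intro: trancl_trans)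

lemma equiv_tp_equiv: "equiv \<U> (tp_equiv X C \<U>)"
proof (rule equivI)
  show "tp_equiv X C \<U> \<subseteq> \<U> \<times> \<U>"
    using tp_rel_subset unfolding tp_equiv_def by blast
  show "refl_on \<U> (tp_equiv X C \<U>)"
    using tp_rel_subset unfolding refl_on_def tp_equiv_def tp_rel_def by auto
  show "sym (tp_equiv X C \<U>)"
    unfolding sym_def tp_equiv_def by auto
  show "trans (tp_equiv X C \<U>)"
    using trans_tp_rel unfolding trans_def tp_equiv_def by blast
qed

context
  fixes \<U> \<V> :: "'a set set" and \<phi> :: "'a set \<Rightarrow> 'a set"
  assumes \<phi>_mem: "\<phi> \<in> \<U> \<rightarrow> \<V>" and \<phi>_sup: "\<forall>A\<in>\<U>. A \<subseteq> \<phi> A"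
begin

lemma tg_edges_map:
  assumes "(A, B) \<in> tg_edges X C \<U>"
  shows "(\<phi> A, \<phi> B) \<in> tg_edges X C \<V>"
proof -
  have "A \<in> \<U>" "B \<in> \<U>" "cprec X C A B"
    using assms unfolding tg_edges_def by simp_all
  moreover from \<open>cprec X C A B\<close> have "cprec X C (\<phi> A) (\<phi> B)"
    by (rule cprec_mono) (use \<phi>_sup \<open>A \<in> \<U>\<close> \<open>B \<in> \<U>\<close> in blast)+
  ultimately show ?thesis
    using \<phi>_mem unfolding tg_edges_def by auto
qed

lemma tp_rel_map:
  assumes "(A, B) \<in> tp_rel X C \<U>"
  shows "(\<phi> A, \<phi> B) \<in> tp_rel X C \<V>"
  using assms unfolding tp_rel_def
proof
  assume "(A, B) \<in> Id_on \<U>"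
  then show "(\<phi> A, \<phi> B) \<in> Id_on \<V> \<union> (tg_edges X C \<V>)\<^sup>+"
    using \<phi>_mem by auto
next
  assume "(A, B) \<in> (tg_edges X C \<U>)\<^sup>+"
  then show "(\<phi> A, \<phi> B) \<in> Id_on \<V> \<union> (tg_edges X C \<V>)\<^sup>+"
    using trancl_map[of "tg_edges X C \<U>" \<phi>, OF tg_edges_map] by blast
qed

lemma tp_equiv_map: "(A, B) \<in> tp_equiv X C \<U> \<Longrightarrow> (\<phi> A, \<phi> B) \<in> tp_equiv X C \<V>"
  using tp_rel_map unfolding tp_equiv_def by blast

end

theorem proposition1:
  fixes X :: "'a topology" and C :: "'a \<Rightarrow> 'a set"
    and \<U> \<V> :: "'a set set" and \<phi> :: "'a set \<Rightarrow> 'a set"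
  assumes "constraint_fun X C"
    and "\<U> \<subseteq> Pow (topspace X)" and "\<V> \<subseteq> Pow (topspace X)"
    and "\<forall>U\<in>\<U>. \<exists>V\<in>\<V>. U \<subseteq> V"
    and "\<phi> \<in> \<U> \<rightarrow> \<V>" and "\<forall>A\<in>\<U>. A \<subseteq> \<phi> A"
  shows "\<exists>f. f \<in> TP X C \<U> \<rightarrow> TP X C \<V> \<and>
           (\<forall>A\<in>\<U>. f (tp_equiv X C \<U> `` {A}) = tp_equiv X C \<V> `` {\<phi> A}) \<and>
           (\<forall>P\<in>TP X C \<U>. \<forall>Q\<in>TP X C \<U>. tp_le X C \<U> P Q \<longrightarrow> tp_le X C \<V> (f P) (f Q))"
proof -
  let ?f = "\<lambda>P. \<Union>A\<in>P. tp_equiv X C \<V> `` {\<phi> A}"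
  note class_map = equiv_tp_equiv equiv_tp_equiv assms(5) tp_equiv_map[OF assms(5,6)]
  have "tp_le X C \<V> (?f P) (?f Q)"
    if "P \<in> TP X C \<U>" "Q \<in> TP X C \<U>" "tp_le X C \<U> P Q" for P Q
  proof -
    obtain A B where "A \<in> P" "B \<in> Q" "(A, B) \<in> tp_rel X C \<U>"
      using \<open>tp_le X C \<U> P Q\<close> unfolding tp_le_def by blast
    moreover from this have "\<phi> A \<in> ?f P" "\<phi> B \<in> ?f Q"
      using that(1,2) mem_UN_class_map[OF class_map] unfolding TP_def by simp_all
    ultimately show ?thesis
      unfolding tp_le_def using tp_rel_map[OF assms(5,6)] by blast
  qed
  moreover have "?f \<in> TP X C \<U> \<rightarrow> TP X C \<V>"
    unfolding TP_def by (rule UN_class_map_funcset[OF class_map])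
  moreover have "?f (tp_equiv X C \<U> `` {A}) = tp_equiv X C \<V> `` {\<phi> A}" if "A \<in> \<U>" for A
    using UN_class_map_class[OF class_map that] .
  ultimately show ?thesis by blast
qed

end
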